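(* Let $n\ge 1$, $a=(a_1,\dots,a_n)\in\mathbb{R}^n$, $\omega=(\omega_1,\dots,\omega_n)\in\mathbb{R}^n$, $\varphi=(\varphi_1,\dots,\varphi_n)\in\mathbb{R}^n$ and $b\in\mathbb{R}$, and define $h:\mathbb{R}\to\mathbb{R}$ by $$h(x)=\sin\Big(\sum_{i=1}^n a_i\sin(\omega_i x+\varphi_i)+b\Big).$$ Then for every $x\in\mathbb{R}$, $$h(x)=\sum_{\mathbf{k}\in\mathbb{Z}^n}\alpha_{\mathbf{k}}(a)\,\sin\Big(\sum_{i=1}^n k_i(\omega_i x+\varphi_i)+b\Big),\qquad \text{where } \alpha_{\mathbf{k}}(a)=\prod_{i=1}^n J_{k_i}(a_i).$$
   Context: For an integer $k$, $J_k$ denotes the Bessel function of the first kind of order $k$. The function $h$ is called a sinusoidal neuron of width $n$ with amplitudes $a$, frequencies $\omega$, phases $\varphi$ and bias $b$. Here $\mathbf{k}=(k_1,\dots,k_n)$. *)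

theory Defs
  imports "HOL-Analysis.Analysis"
begin

definition bessel_J :: "int \<Rightarrow> real \<Rightarrow> real" where
  "bessel_J k x =
     (let K = nat \<bar>k\<bar>
      in (if k < 0 then (-1) ^ K else 1) *
         (\<Sum>m. (-1) ^ m / (fact m * fact (m + K)) * (x / 2) ^ (2 * m + K)))"

definition sin_neuron :: "real ^ 'n::finite \<Rightarrow> real ^ 'n \<Rightarrow> real ^ 'n \<Rightarrow> real \<Rightarrow> real \<Rightarrow> real" where
  "sin_neuron a \<omega> \<phi> b x = sin ((\<Sum>i\<in>UNIV. a $ i * sin (\<omega> $ i * x + \<phi> $ i)) + b)"

end

theory Submission
  imports Defs
begin

text \<open>Multiplying the exponential series of \<open>exp (x z / 2)\<close> and \<open>exp (- x / (2 z))\<close> and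
  collecting the terms with the same power of \<open>z\<close> gives the generating function
  \<open>exp (x/2 (z - 1/z)) = \<Sum>k J_k(x) z^k\<close>; at \<open>z = e^{i\<theta>}\<close> this is the Jacobi--Anger expansion
  \<open>e^{i x sin \<theta>} = \<Sum>k J_k(x) e^{i k \<theta>}\<close>. All series involved converge absolutely, so the
  product of \<open>n\<close> such expansions multiplies out to a sum over \<open>\<int>^n\<close>; multiplying by
  \<open>e^{i b}\<close> and taking imaginary parts gives the expansion of the neuron.\<close>

lemma has_sum_exp:
  fixes z :: "'a :: {real_normed_field, banach}"
  shows "((\<lambda>n. z ^ n / fact n) has_sum exp z) UNIV"
proof -
  have "summable (\<lambda>n. norm (z ^ n / fact n))"
    using summable_norm_exp[of z] by (simp add: scaleR_conv_of_real divide_inverse mult.commute)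
  moreover have "(\<lambda>n. z ^ n / fact n) sums exp z"
    using exp_converges[of z] by (simp add: scaleR_conv_of_real divide_inverse mult.commute)
  ultimately show ?thesis
    by (rule norm_summable_imp_has_sum)
qed

lemma has_sum_suminf:
  fixes f :: "nat \<Rightarrow> 'a :: {topological_comm_monoid_add, t2_space}"
  assumes "f summable_on UNIV"
  shows "(f has_sum suminf f) UNIV"
proof -
  have "(f has_sum infsum f UNIV) UNIV"
    using assms by (rule has_sum_infsum)
  moreover from this have "suminf f = infsum f UNIV"
    by (intro sums_unique [symmetric] has_sum_imp_sums)
  ultimately show ?thesis
    by simp
qed

lemma has_sum_mult_Times_complex:
  fixes f g :: "_ \<Rightarrow> complex"
  assumes f: "(f has_sum s) A" and g: "(g has_sum t) B"
  shows "((\<lambda>(x, y). f x * g y) has_sum s * t) (A \<times> B)"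
proof (rule has_sum_SigmaI)
  show "((\<lambda>y. (\<lambda>(x, y). f x * g y) (x, y)) has_sum f x * t) B" for x
    using has_sum_cmult_right[OF g] by simp
  show "((\<lambda>x. f x * t) has_sum s * t) A"
    using f by (rule has_sum_cmult_left)
  have norm_f: "(\<lambda>x. norm (f x)) summable_on A" and norm_g: "(\<lambda>y. norm (g y)) summable_on B"
    using f g summable_on_iff_abs_summable_on_complex has_sum_imp_summable by blast+
  have "(\<lambda>p. norm ((\<lambda>(x, y). f x * g y) p)) summable_on A \<times> B"
  proof (subst Infinite_Sum.abs_summable_on_Sigma_iff, intro conjI ballI)
    show "(\<lambda>y. norm ((\<lambda>(x, y). f x * g y) (x, y))) summable_on B" for x
      using summable_on_cmult_right[OF norm_g, of "norm (f x)"] by (simp add: norm_mult)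
    show "(\<lambda>x. norm (infsum (\<lambda>y. norm ((\<lambda>(x, y). f x * g y) (x, y))) B)) summable_on A"
      using summable_on_cmult_left[OF norm_f, of "infsum (\<lambda>y. norm (g y)) B"]
      by (simp add: norm_mult infsum_cmult_right' infsum_nonneg)
  qed
  then show "(\<lambda>(x, y). f x * g y) summable_on A \<times> B"
    using summable_on_iff_abs_summable_on_complex by blast
qed

lemma has_sum_prod_PiE_complex:
  fixes f :: "'a \<Rightarrow> 'b \<Rightarrow> complex"
  assumes "finite A" and "\<And>x. x \<in> A \<Longrightarrow> (f x has_sum s x) (B x)"
  shows "((\<lambda>g. \<Prod>x\<in>A. f x (g x)) has_sum (\<Prod>x\<in>A. s x)) (PiE A B)"
  using assms
proof (induction A rule: finite_induct)
  case empty
  then show ?case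
    using has_sum_finite[of "{\<lambda>_. undefined}" "\<lambda>_. 1 :: complex"] by simp
next
  case (insert x F)
  have upd: "(\<lambda>g. \<Prod>z\<in>insert x F. f z (g z)) \<circ> (\<lambda>(g, y). g(x := y))
      = (\<lambda>(g, y). (\<Prod>z\<in>F. f z (g z)) * f x y)"
  proof (intro ext, clarify)
    fix g y
    have "(\<Prod>z\<in>F. f z ((g(x := y)) z)) = (\<Prod>z\<in>F. f z (g z))"
      using insert.hyps by (intro prod.cong) auto
    with insert.hyps show "((\<lambda>g. \<Prod>z\<in>insert x F. f z (g z)) \<circ> (\<lambda>(g, y). g(x := y))) (g, y)
        = (\<Prod>z\<in>F. f z (g z)) * f x y"
      by (simp add: mult.commute)
  qed
  have pi: "PiE (insert x F) B = (\<lambda>(g, y). g(x := y)) ` (PiE F B \<times> B x)"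
    unfolding PiE_insert_eq
    by (subst swap_product [symmetric]) (simp add: image_image case_prod_unfold)
  have prod_s: "(\<Prod>z\<in>insert x F. s z) = (\<Prod>z\<in>F. s z) * s x"
    using insert.hyps by (simp add: mult.commute)
  have "((\<lambda>(g, y). (\<Prod>z\<in>F. f z (g z)) * f x y) has_sum (\<Prod>z\<in>F. s z) * s x) (PiE F B \<times> B x)"
    using insert by (intro has_sum_mult_Times_complex) auto
  then show ?case
    unfolding pi has_sum_reindex[OF inj_combinator'[OF \<open>x \<notin> F\<close>]] upd prod_s .
qed

lemma cis_sum: "finite I \<Longrightarrow> cis (\<Sum>i\<in>I. t i) = (\<Prod>i\<in>I. cis (t i))"
  by (induction I rule: finite_induct) (simp_all add: cis_mult [symmetric])

definition bessel_term :: "nat \<Rightarrow> real \<Rightarrow> nat \<Rightarrow> real" where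
  "bessel_term K x m = (-1) ^ m / (fact m * fact (m + K)) * (x / 2) ^ (2 * m + K)"

lemma bessel_J_eq_suminf:
  "bessel_J k x = (if k < 0 then (-1) ^ nat \<bar>k\<bar> else 1) * suminf (bessel_term (nat \<bar>k\<bar>) x)"
  by (simp add: bessel_J_def Let_def bessel_term_def [abs_def])

lemma exp_series_product_term:
  fixes c z w :: "'a :: field_char_0"
  assumes "z * w = -1"
  shows "(c * z) ^ (m + K) / fact (m + K) * ((c * w) ^ m / fact m)
           = z ^ K * ((-1) ^ m * c ^ (2 * m + K) / (fact m * fact (m + K)))"
proof -
  have "c ^ (2 * m + K) = c ^ m * c ^ m * c ^ K"
    by (simp only: power_add mult_2)
  then have "(c * z) ^ (m + K) * (c * w) ^ m = z ^ K * (z * w) ^ m * c ^ (2 * m + K)"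
    by (simp only: power_mult_distrib power_add mult_ac)
  then show ?thesis
    using assms by (simp add: mult_ac)
qed

lemma bessel_J_generating_function:
  fixes x :: real and z :: complex
  assumes "z \<noteq> 0"
  shows "((\<lambda>k::int. of_real (bessel_J k x) * z powi k)
           has_sum exp (of_real x / 2 * (z - inverse z))) UNIV"
proof -
  define c where "c = complex_of_real x / 2"
  define w where "w = - inverse z"
  define f :: "nat \<times> nat \<Rightarrow> complex"
    where "f = (\<lambda>(p, q). (c * z) ^ p / fact p * ((c * w) ^ q / fact q))"
  \<comment> \<open>\<open>j\<close> inverts \<open>(p, q) \<mapsto> (p - q, min p q)\<close>: it groups the double series by the power \<open>z ^ (p - q)\<close>.\<close>
  define j :: "int \<times> nat \<Rightarrow> nat \<times> nat"
    where "j = (\<lambda>(k, m). if k \<ge> 0 then (m + nat k, m) else (m, m + nat (- k)))"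
  define u :: "int \<Rightarrow> complex"
    where "u k = (if k < 0 then (-1) ^ nat \<bar>k\<bar> else 1) * z powi k" for k
  have zw: "z * w = -1" "w * z = -1"
    using assms by (simp_all add: w_def)
  have "(f has_sum exp (c * z) * exp (c * w)) (UNIV \<times> UNIV)"
    unfolding f_def by (intro has_sum_mult_Times_complex has_sum_exp)
  moreover have "exp (c * z) * exp (c * w) = exp (of_real x / 2 * (z - inverse z))"
    by (simp add: c_def w_def algebra_simps diff_divide_distrib flip: exp_add)
  moreover have "((f \<circ> j) has_sum s) (UNIV \<times> UNIV) = (f has_sum s) (UNIV \<times> UNIV)" for s
    by (rule has_sum_reindex_bij_witness[where i = "\<lambda>(p, q). (int p - int q, min p q)"])
       (auto simp: j_def)
  ultimately have double: "((f \<circ> j) has_sum exp (of_real x / 2 * (z - inverse z))) (UNIV \<times> UNIV)"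
    by simp
  have reindexed_term: "(f \<circ> j) (k, m) = u k * of_real (bessel_term (nat \<bar>k\<bar>) x m)" for k m
  proof (cases "k \<ge> 0")
    case True
    have "(f \<circ> j) (k, m) = (c * z) ^ (m + nat k) / fact (m + nat k) * ((c * w) ^ m / fact m)"
      using True by (simp add: f_def j_def)
    also have "\<dots> = z ^ nat k * ((-1) ^ m * c ^ (2 * m + nat k) / (fact m * fact (m + nat k)))"
      by (rule exp_series_product_term [OF zw(1)])
    also have "z ^ nat k = z powi k"
      using True by (simp add: power_int_def)
    finally show ?thesis
      using True by (simp add: u_def bessel_term_def c_def)
  next
    case False
    have "(f \<circ> j) (k, m) = (c * w) ^ (m + nat (- k)) / fact (m + nat (- k)) * ((c * z) ^ m / fact m)"
      using False by (simp add: f_def j_def mult.commute)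
    also have "\<dots> = w ^ nat (- k) * ((-1) ^ m * c ^ (2 * m + nat (- k)) / (fact m * fact (m + nat (- k))))"
      by (rule exp_series_product_term [OF zw(2)])
    also have "w ^ nat (- k) = (-1) ^ nat (- k) * z powi k"
      using False power_minus [of "inverse z" "nat (- k)"] by (simp add: w_def power_int_def)
    finally show ?thesis
      using False by (simp add: u_def bessel_term_def c_def)
  qed
  have rows: "((\<lambda>m. (f \<circ> j) (k, m)) has_sum of_real (bessel_J k x) * z powi k) UNIV" for k
  proof -
    have row: "(\<lambda>m. (f \<circ> j) (k, m)) = (\<lambda>m. u k * of_real (bessel_term (nat \<bar>k\<bar>) x m))"
      by (simp only: reindexed_term)
    have "(\<lambda>(k, m). (f \<circ> j) (k, m)) summable_on UNIV \<times> UNIV"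
      using has_sum_imp_summable [OF double] by (simp only: case_prod_eta)
    then have "(\<lambda>m. u k * of_real (bessel_term (nat \<bar>k\<bar>) x m)) summable_on UNIV"
      unfolding row [symmetric] by (rule summable_on_SigmaD1) simp
    moreover have "u k \<noteq> 0"
      using assms by (simp add: u_def)
    ultimately have "(\<lambda>m. complex_of_real (bessel_term (nat \<bar>k\<bar>) x m)) summable_on UNIV"
      using summable_on_cmult_right' by blast
    then have "bessel_term (nat \<bar>k\<bar>) x summable_on UNIV"
      using summable_on_bounded_linear [OF bounded_linear_Re] by fastforce
    then have "((\<lambda>m. u k * of_real (bessel_term (nat \<bar>k\<bar>) x m))
        has_sum u k * of_real (suminf (bessel_term (nat \<bar>k\<bar>) x))) UNIV"
      by (intro has_sum_cmult_right has_sum_of_real has_sum_suminf)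
    moreover have "u k * of_real (suminf (bessel_term (nat \<bar>k\<bar>) x)) = of_real (bessel_J k x) * z powi k"
      by (simp add: u_def bessel_J_eq_suminf)
    ultimately show ?thesis
      unfolding row by simp
  qed
  show ?thesis
    by (rule has_sum_Sigma' [OF double rows])
qed

lemma jacobi_anger:
  "((\<lambda>k::int. of_real (bessel_J k x) * cis (of_int k * \<theta>)) has_sum cis (x * sin \<theta>)) UNIV"
proof -
  have "of_real x / 2 * (cis \<theta> - inverse (cis \<theta>)) = \<i> * of_real (x * sin \<theta>)"
    by (simp add: complex_eq_iff)
  then have "exp (of_real x / 2 * (cis \<theta> - inverse (cis \<theta>))) = cis (x * sin \<theta>)"
    unfolding cis_conv_exp [of "x * sin \<theta>"] by (simp only:)
  then show ?thesis
    using bessel_J_generating_function[of "cis \<theta>" x] by (simp add: cis_power_int)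
qed

lemma jacobi_anger_multivariate:
  fixes x \<theta> :: "real ^ 'n :: finite"
  shows "((\<lambda>k :: int ^ 'n. of_real (\<Prod>i\<in>UNIV. bessel_J (k $ i) (x $ i))
             * cis (\<Sum>i\<in>UNIV. of_int (k $ i) * \<theta> $ i))
           has_sum cis (\<Sum>i\<in>UNIV. x $ i * sin (\<theta> $ i))) UNIV"
proof -
  define F where "F i k = of_real (bessel_J k (x $ i)) * cis (of_int k * \<theta> $ i)" for i k
  have "((\<lambda>g. \<Prod>i\<in>UNIV. F i (g i)) has_sum (\<Prod>i\<in>UNIV. cis (x $ i * sin (\<theta> $ i)))) (PiE UNIV (\<lambda>_. UNIV))"
    by (intro has_sum_prod_PiE_complex) (auto simp: F_def jacobi_anger)
  moreover have "((\<lambda>k. \<Prod>i\<in>UNIV. F i (k $ i)) has_sum s) UNIV = ((\<lambda>g. \<Prod>i\<in>UNIV. F i (g i)) has_sum s) UNIV" for s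
    by (rule has_sum_reindex_bij_witness[where i = vec_lambda and j = vec_nth]) auto
  ultimately show ?thesis
    by (simp add: F_def prod.distrib cis_sum)
qed

theorem theorem1:
  fixes a \<omega> \<phi> :: "real ^ 'n::finite" and b x :: real
  shows "((\<lambda>k :: int ^ 'n. (\<Prod>i\<in>UNIV. bessel_J (k $ i) (a $ i)) *
            sin ((\<Sum>i\<in>UNIV. of_int (k $ i) * (\<omega> $ i * x + \<phi> $ i)) + b))
          has_sum sin_neuron a \<omega> \<phi> b x) UNIV"
proof -
  define \<theta> :: "real ^ 'n" where "\<theta> = (\<chi> i. \<omega> $ i * x + \<phi> $ i)"
  have "((\<lambda>k :: int ^ 'n. of_real (\<Prod>i\<in>UNIV. bessel_J (k $ i) (a $ i))
            * cis (\<Sum>i\<in>UNIV. of_int (k $ i) * \<theta> $ i) * cis b)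
          has_sum cis (\<Sum>i\<in>UNIV. a $ i * sin (\<theta> $ i)) * cis b) UNIV"
    by (intro has_sum_cmult_left jacobi_anger_multivariate)
  then have "((\<lambda>k :: int ^ 'n. Im (of_real (\<Prod>i\<in>UNIV. bessel_J (k $ i) (a $ i))
            * cis (\<Sum>i\<in>UNIV. of_int (k $ i) * \<theta> $ i) * cis b))
          has_sum Im (cis (\<Sum>i\<in>UNIV. a $ i * sin (\<theta> $ i)) * cis b)) UNIV"
    by (rule has_sum_bounded_linear [OF bounded_linear_Im])
  then show ?thesis
    by (simp add: \<theta>_def sin_neuron_def cis_mult mult.assoc del: of_real_prod)
qed

end
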